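(* Let $|\Psi\rangle=|\Psi'\rangle\otimes|\Phi\rangle$, where $|\Psi'\rangle$ and $|\Phi\rangle$ are $M$-party stabilizer states (each party $\alpha$ holding some qubits of each), and suppose the stabilizer group $S_\Phi$ of $|\Phi\rangle$ satisfies $S_\Phi=\sum_{\alpha\in M}(S_\Phi)_{\hat\alpha}$. Then $\Gamma(\Psi)=\{\rho'\otimes|\Phi\rangle\langle\Phi|:\ \rho'\in\Gamma(\Psi')\}$.
   Context: Let $G^n\cong\mathbb{F}_2^{2n}$, with elements $f=(a_1,b_1,\dots,a_n,b_n)$; $\sigma_{00}=I,\sigma_{10}=\sigma^x,\sigma_{01}=\sigma^z,\sigma_{11}=\sigma^y$, $\sigma(f)=\sigma_{a_1b_1}\otimes\cdots\otimes\sigma_{a_nb_n}$; symplectic form $\omega(f,f')=\sum_j(a_jb_j'+b_ja_j')\bmod 2$. A stabilizer state with stabilizer group $S$ ($S$ self-dual, i.e. $S=\{f:\omega(f,g)=0\ \forall g\in S\}$) is the unique up-to-phase unit vector with $\sigma(f)|\Psi\rangle=\epsilon(f)|\Psi\rangle$ for all $f\in S$ for fixed consistent signs. In the $M$-party setting, party $\alpha$ holds $n_\alpha$ qubits; $f_\alpha$ is the restriction of $f$ to party $\alpha$'s qubits; co-local subgroup $S_{\hat\alpha}=\{g\in S:g_\alpha=0\}$. For an $M$-party pure state $|\Psi\rangle$, $\Gamma(\Psi)$ is the set of density operators $\rho$ on the same qubits with $\mathrm{Tr}_\alpha\rho=\mathrm{Tr}_\alpha|\Psi\rangle\langle\Psi|$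 for all $\alpha\in M$, $\mathrm{Tr}_\alpha$ being the partial trace over all qubits of party $\alpha$. *)

theory Defs
  imports Complex_Main "HOL-Library.Z2"
begin

text \<open>A computational basis configuration of a
finite set Q of qubits is a function nat => bool vanishing outside Q. Vectors
(state vectors) and operators (matrices) on the qubits Q are complex-valued functions on
configurations (resp. pairs of configurations), required to vanish outside Q.\<close>

type_synonym cfg = "nat \<Rightarrow> bool"
type_synonym qvec = "cfg \<Rightarrow> complex"
type_synonym qop = "cfg \<Rightarrow> cfg \<Rightarrow> complex"
text \<open>An element f of G^n: f j = (a_j, b_j) in F_2 x F_2.\<close>
type_synonym pauli_label = "nat \<Rightarrow> bit \<times> bit"

definition qbasis :: "nat set \<Rightarrow> cfg set" where
  "qbasis Q = {x. \<forall>i. i \<notin> Q \<longrightarrow> \<not> x i}"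

definition restr :: "cfg \<Rightarrow> nat set \<Rightarrow> cfg" where
  "restr x Q = (\<lambda>i. i \<in> Q \<and> x i)"

definition merge :: "cfg \<Rightarrow> cfg \<Rightarrow> cfg" where
  "merge x z = (\<lambda>i. x i \<or> z i)"

definition is_vec :: "nat set \<Rightarrow> qvec \<Rightarrow> bool" where
  "is_vec Q \<psi> \<longleftrightarrow> (\<forall>x. x \<notin> qbasis Q \<longrightarrow> \<psi> x = 0)"

definition is_op :: "nat set \<Rightarrow> qop \<Rightarrow> bool" where
  "is_op Q \<rho> \<longleftrightarrow> (\<forall>x y. x \<notin> qbasis Q \<or> y \<notin> qbasis Q \<longrightarrow> \<rho> x y = 0)"

definition unit_vec :: "nat set \<Rightarrow> qvec \<Rightarrow> bool" where
  "unit_vec Q \<psi> \<longleftrightarrow> is_vec Q \<psi> \<and> (\<Sum>x\<in>qbasis Q. (cmod (\<psi> x))\<^sup>2) = 1"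

definition proj :: "qvec \<Rightarrow> qop" where
  "proj \<psi> = (\<lambda>x y. \<psi> x * cnj (\<psi> y))"

definition density :: "nat set \<Rightarrow> qop \<Rightarrow> bool" where
  "density Q \<rho> \<longleftrightarrow> is_op Q \<rho> \<and>
     (\<forall>v::qvec. Im (\<Sum>x\<in>qbasis Q. \<Sum>y\<in>qbasis Q. cnj (v x) * \<rho> x y * v y) = 0 \<and>
                Re (\<Sum>x\<in>qbasis Q. \<Sum>y\<in>qbasis Q. cnj (v x) * \<rho> x y * v y) \<ge> 0) \<and>
     (\<Sum>x\<in>qbasis Q. \<rho> x x) = 1"

definition ptrace :: "nat set \<Rightarrow> nat set \<Rightarrow> qop \<Rightarrow> qop" where
  "ptrace Q A \<rho> = (\<lambda>x y. if x \<in> qbasis (Q - A) \<and> y \<in> qbasis (Q - A)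
      then (\<Sum>z\<in>qbasis (Q \<inter> A). \<rho> (merge x z) (merge y z)) else 0)"

definition tensor_vec :: "nat set \<Rightarrow> nat set \<Rightarrow> qvec \<Rightarrow> qvec \<Rightarrow> qvec" where
  "tensor_vec Q1 Q2 \<psi> \<phi> = (\<lambda>x. if x \<in> qbasis (Q1 \<union> Q2)
      then \<psi> (restr x Q1) * \<phi> (restr x Q2) else 0)"

definition tensor_op :: "nat set \<Rightarrow> nat set \<Rightarrow> qop \<Rightarrow> qop \<Rightarrow> qop" where
  "tensor_op Q1 Q2 \<rho> \<sigma> = (\<lambda>x y. if x \<in> qbasis (Q1 \<union> Q2) \<and> y \<in> qbasis (Q1 \<union> Q2)
      then \<rho> (restr x Q1) (restr y Q1) * \<sigma> (restr x Q2) (restr y Q2) else 0)"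

text \<open>Pauli labels supported on Q, symplectic form, and the action of sigma(f).
  sigma_{ab}|x> = i^{ab} (-1)^{b x} |x + a>, which gives I, X, Z, Y for ab = 00, 10, 01, 11.\<close>
definition pauli_on :: "nat set \<Rightarrow> pauli_label \<Rightarrow> bool" where
  "pauli_on Q f \<longleftrightarrow> (\<forall>j. j \<notin> Q \<longrightarrow> f j = (0, 0))"

definition symp :: "nat set \<Rightarrow> pauli_label \<Rightarrow> pauli_label \<Rightarrow> bit" where
  "symp Q f g = (\<Sum>j\<in>Q. fst (f j) * snd (g j) + snd (f j) * fst (g j))"

definition pauli_apply :: "nat set \<Rightarrow> pauli_label \<Rightarrow> qvec \<Rightarrow> qvec" where
  "pauli_apply Q f \<psi> = (\<lambda>y. if y \<in> qbasis Q then
      (let x = (\<lambda>i. i \<in> Q \<and> (y i \<noteq> (fst (f i) = 1))) in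
        (\<Prod>j\<in>Q. (if fst (f j) = 1 \<and> snd (f j) = 1 then \<i> else 1) *
                 (if snd (f j) = 1 \<and> x j then -1 else 1)) * \<psi> x)
      else 0)"

definition stabilizer_state :: "nat set \<Rightarrow> pauli_label set \<Rightarrow> qvec \<Rightarrow> bool" where
  "stabilizer_state Q S \<psi> \<longleftrightarrow>
     unit_vec Q \<psi> \<and>
     S = {f. pauli_on Q f \<and> (\<forall>g\<in>S. symp Q f g = 0)} \<and>
     (\<exists>\<epsilon>::pauli_label \<Rightarrow> complex. \<forall>f\<in>S. \<epsilon> f \<in> {1, -1} \<and>
         pauli_apply Q f \<psi> = (\<lambda>x. \<epsilon> f * \<psi> x))"

text \<open>Multi-party structure: owner j is the party holding qubit j.\<close>
definition party_qubits :: "(nat \<Rightarrow> 'p) \<Rightarrow> nat set \<Rightarrow> 'p \<Rightarrow> nat set" where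
  "party_qubits owner Q \<alpha> = {j \<in> Q. owner j = \<alpha>}"

definition colocal :: "(nat \<Rightarrow> 'p) \<Rightarrow> 'p \<Rightarrow> pauli_label set \<Rightarrow> pauli_label set" where
  "colocal owner \<alpha> S = {g \<in> S. \<forall>j. owner j = \<alpha> \<longrightarrow> g j = (0, 0)}"

definition subgroup_sum :: "'p set \<Rightarrow> ('p \<Rightarrow> pauli_label set) \<Rightarrow> pauli_label set" where
  "subgroup_sum M T = {(\<lambda>j. (\<Sum>\<alpha>\<in>M. fst (g \<alpha> j), \<Sum>\<alpha>\<in>M. snd (g \<alpha> j))) | g.
       \<forall>\<alpha>\<in>M. g \<alpha> \<in> T \<alpha>}"

definition Gamma :: "(nat \<Rightarrow> 'p) \<Rightarrow> 'p set \<Rightarrow> nat set \<Rightarrow> qvec \<Rightarrow> qop set" where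
  "Gamma owner M Q \<psi> = {\<rho>. density Q \<rho> \<and>
     (\<forall>\<alpha>\<in>M. ptrace Q (party_qubits owner Q \<alpha>) \<rho> =
             ptrace Q (party_qubits owner Q \<alpha>) (proj \<psi>))}"

end

theory Submission
  imports Defs
begin

text \<open>Every t in a co-local subgroup of S_Phi acts trivially on some party alpha, so its expectation
  value in any rho in Gamma(Psi) is determined by the marginal Tr_alpha rho = Tr_alpha |Psi><Psi| and
  equals the eigenvalue +-1 of Psi; for a positive operator of trace one this forces
  sigma(t) rho = +-rho. These t generate S_Phi, so only Paulis in S_Phi commute with all of them, and
  since the Paulis span all operators, the only vectors on Phi's qubits fixed by all such t are the
  multiples of Phi. Hence every column of rho is a multiple of Phi along Phi's qubits, Hermiticity gives
  rho = rho' (x) |Phi><Phi|, and the marginal conditions on rho reduce to those on rho'.\<close>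

section \<open>Basis configurations and vectors\<close>

lemma finite_qbasis: "finite Q \<Longrightarrow> finite (qbasis Q)"
proof -
  assume "finite Q"
  have "qbasis Q \<subseteq> (\<lambda>S i. i \<in> S) ` Pow Q"
  proof
    fix x assume "x \<in> qbasis Q"
    then have "x = (\<lambda>i. i \<in> {j. x j})" and "{j. x j} \<in> Pow Q" by (auto simp: qbasis_def)
    then show "x \<in> (\<lambda>S i. i \<in> S) ` Pow Q" by blast
  qed
  then show ?thesis using \<open>finite Q\<close> finite_subset by blast
qed

lemma merge_in_qbasis: "x \<in> qbasis A \<Longrightarrow> z \<in> qbasis B \<Longrightarrow> merge x z \<in> qbasis (A \<union> B)"
  by (auto simp: qbasis_def merge_def)

lemma restr_in_qbasis: "restr y A \<in> qbasis A"
  by (auto simp: restr_def qbasis_def)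

lemma merge_commute: "merge x z = merge z x"
  by (auto simp: merge_def fun_eq_iff)

lemma restr_merge_left: "A \<inter> B = {} \<Longrightarrow> x \<in> qbasis A \<Longrightarrow> z \<in> qbasis B \<Longrightarrow> restr (merge x z) A = x"
  by (auto simp: restr_def merge_def qbasis_def fun_eq_iff)

lemma restr_merge_right: "A \<inter> B = {} \<Longrightarrow> x \<in> qbasis A \<Longrightarrow> z \<in> qbasis B \<Longrightarrow> restr (merge x z) B = z"
  by (auto simp: restr_def merge_def qbasis_def fun_eq_iff)

lemma qbasis_UnE:
  assumes "y \<in> qbasis (A \<union> B)"
  obtains x z where "x \<in> qbasis A" "z \<in> qbasis B" "y = merge x z"
proof
  show "y = merge (restr y A) (restr y B)"
    using assms by (auto simp: restr_def merge_def qbasis_def fun_eq_iff)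
qed (rule restr_in_qbasis)+

lemma sum_qbasis_Un:
  assumes "A \<inter> B = {}"
  shows "(\<Sum>y\<in>qbasis (A \<union> B). F y) = (\<Sum>x\<in>qbasis A. \<Sum>z\<in>qbasis B. F (merge x z))"
proof -
  have "bij_betw (\<lambda>(x, z). merge x z) (qbasis A \<times> qbasis B) (qbasis (A \<union> B))"
    by (rule bij_betw_byWitness[where f' = "\<lambda>y. (restr y A, restr y B)"])
      (use assms in \<open>auto simp: restr_merge_left restr_merge_right merge_in_qbasis
          restr_in_qbasis elim: qbasis_UnE\<close>)
  then have "(\<Sum>y\<in>qbasis (A \<union> B). F y) = (\<Sum>(x, z)\<in>qbasis A \<times> qbasis B. F (merge x z))"
    by (simp add: sum.reindex_bij_betw[symmetric] case_prod_unfold)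
  then show ?thesis by (simp add: sum.cartesian_product)
qed

lemma tensor_vec_merge:
  "Q1 \<inter> Q2 = {} \<Longrightarrow> x \<in> qbasis Q1 \<Longrightarrow> z \<in> qbasis Q2 \<Longrightarrow>
   tensor_vec Q1 Q2 \<psi> \<phi> (merge x z) = \<psi> x * \<phi> z"
  by (simp add: tensor_vec_def merge_in_qbasis restr_merge_left restr_merge_right)

lemma tensor_op_merge:
  "Q1 \<inter> Q2 = {} \<Longrightarrow> x \<in> qbasis Q1 \<Longrightarrow> z \<in> qbasis Q2 \<Longrightarrow> y \<in> qbasis Q1 \<Longrightarrow> w \<in> qbasis Q2 \<Longrightarrow>
   tensor_op Q1 Q2 \<rho> \<sigma> (merge x z) (merge y w) = \<rho> x y * \<sigma> z w"
  by (simp add: tensor_op_def merge_in_qbasis restr_merge_left restr_merge_right)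

definition braket :: "nat set \<Rightarrow> qvec \<Rightarrow> qvec \<Rightarrow> complex" where
  "braket Q u v = (\<Sum>y\<in>qbasis Q. cnj (u y) * v y)"

lemma braket_self_unit: "unit_vec Q \<psi> \<Longrightarrow> braket Q \<psi> \<psi> = 1"
proof -
  assume "unit_vec Q \<psi>"
  have "braket Q \<psi> \<psi> = (\<Sum>x\<in>qbasis Q. complex_of_real ((cmod (\<psi> x))\<^sup>2))"
    unfolding braket_def by (intro sum.cong refl) (metis complex_norm_square mult.commute)
  also have "\<dots> = 1"
    using \<open>unit_vec Q \<psi>\<close> unfolding unit_vec_def of_real_sum[symmetric] by simp
  finally show ?thesis .
qed

lemma unit_vec_tensor:
  assumes "Q1 \<inter> Q2 = {}" "unit_vec Q1 \<psi>" "unit_vec Q2 \<phi>"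
  shows "unit_vec (Q1 \<union> Q2) (tensor_vec Q1 Q2 \<psi> \<phi>)"
proof -
  have "(\<Sum>y\<in>qbasis (Q1 \<union> Q2). (cmod (tensor_vec Q1 Q2 \<psi> \<phi> y))\<^sup>2) =
     (\<Sum>x\<in>qbasis Q1. \<Sum>z\<in>qbasis Q2. (cmod (\<psi> x))\<^sup>2 * (cmod (\<phi> z))\<^sup>2)"
    using assms(1) by (simp add: sum_qbasis_Un tensor_vec_merge norm_mult power_mult_distrib)
  also have "\<dots> = 1"
    using assms(2,3) by (simp add: unit_vec_def flip: sum_product)
  finally show ?thesis by (simp add: unit_vec_def is_vec_def tensor_vec_def)
qed

lemma proj_tensor_vec: "proj (tensor_vec Q1 Q2 \<psi> \<phi>) = tensor_op Q1 Q2 (proj \<psi>) (proj \<phi>)"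
  by (intro ext) (simp add: proj_def tensor_vec_def tensor_op_def)

section \<open>Pauli operators\<close>

definition pauli_flip :: "nat set \<Rightarrow> pauli_label \<Rightarrow> cfg \<Rightarrow> cfg" where
  "pauli_flip Q f y = (\<lambda>i. i \<in> Q \<and> (y i \<noteq> (fst (f i) = 1)))"

definition pauli_phase :: "bit \<times> bit \<Rightarrow> bool \<Rightarrow> complex" where
  "pauli_phase ab p = (if fst ab = 1 \<and> snd ab = 1 then \<i> else 1) * (if snd ab = 1 \<and> p then -1 else 1)"

definition pauli_coeff :: "nat set \<Rightarrow> pauli_label \<Rightarrow> cfg \<Rightarrow> complex" where
  "pauli_coeff Q f y = (\<Prod>j\<in>Q. pauli_phase (f j) (pauli_flip Q f y j))"

lemma pauli_apply_eq:
  "pauli_apply Q f v y = (if y \<in> qbasis Q then pauli_coeff Q f y * v (pauli_flip Q f y) else 0)"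
  by (simp add: pauli_apply_def pauli_coeff_def pauli_flip_def pauli_phase_def Let_def)

lemma pauli_apply_scale: "pauli_apply Q f (\<lambda>x. a * v x) = (\<lambda>x. a * pauli_apply Q f v x)"
  by (rule ext) (simp add: pauli_apply_eq)

lemma pauli_apply_diff:
  "pauli_apply Q f (\<lambda>x. u x - v x) = (\<lambda>x. pauli_apply Q f u x - pauli_apply Q f v x)"
  by (rule ext) (simp add: pauli_apply_eq algebra_simps)

lemma pauli_flip_in_qbasis: "pauli_flip Q f y \<in> qbasis Q"
  by (simp add: pauli_flip_def qbasis_def)

lemma pauli_flip_flip: "y \<in> qbasis Q \<Longrightarrow> pauli_flip Q f (pauli_flip Q f y) = y"
  by (auto simp: pauli_flip_def qbasis_def fun_eq_iff)

lemma pauli_flip_commute: "pauli_flip Q f (pauli_flip Q g y) = pauli_flip Q g (pauli_flip Q f y)"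
  by (auto simp: pauli_flip_def fun_eq_iff)

lemma sum_qbasis_pauli_flip: "(\<Sum>y\<in>qbasis Q. F (pauli_flip Q f y)) = (\<Sum>y\<in>qbasis Q. F y)"
proof -
  have "bij_betw (pauli_flip Q f) (qbasis Q) (qbasis Q)"
    by (rule bij_betw_byWitness[where f' = "pauli_flip Q f"])
      (auto simp: pauli_flip_flip pauli_flip_in_qbasis)
  then show ?thesis by (rule sum.reindex_bij_betw)
qed

lemma pauli_coeff_flip: "pauli_coeff Q f (pauli_flip Q f y) = cnj (pauli_coeff Q f y)"
proof -
  have phase_flip: "pauli_phase ab (p \<noteq> (fst ab = 1)) = cnj (pauli_phase ab p)" for ab p
    by (cases "fst ab"; cases "snd ab"; cases p) (simp_all add: pauli_phase_def)
  show ?thesis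
    unfolding pauli_coeff_def cnj_prod
    by (intro prod.cong refl) (simp add: pauli_flip_def phase_flip[symmetric])
qed

lemma cnj_pauli_coeff_mult: "cnj (pauli_coeff Q f y) * pauli_coeff Q f y = 1"
proof -
  have "cnj (pauli_phase ab p) * pauli_phase ab p = 1" for ab p
    by (cases "fst ab"; cases "snd ab"; cases p) (simp_all add: pauli_phase_def)
  then show ?thesis by (simp add: pauli_coeff_def cnj_prod flip: prod.distrib)
qed

lemma pauli_apply_adjoint: "braket Q u (pauli_apply Q f v) = braket Q (pauli_apply Q f u) v"
proof -
  let ?p = "pauli_flip Q f" and ?c = "pauli_coeff Q f"
  have "braket Q u (pauli_apply Q f v) = (\<Sum>y\<in>qbasis Q. cnj (u y) * ?c y * v (?p y))"
    unfolding braket_def by (rule sum.cong) (auto simp: pauli_apply_eq)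
  also have "\<dots> = (\<Sum>y\<in>qbasis Q. cnj (u (?p y)) * ?c (?p y) * v (?p (?p y)))"
    by (rule sum_qbasis_pauli_flip[symmetric])
  also have "\<dots> = braket Q (pauli_apply Q f u) v"
    unfolding braket_def
    by (rule sum.cong) (auto simp: pauli_apply_eq pauli_flip_flip pauli_coeff_flip pauli_flip_in_qbasis)
  finally show ?thesis .
qed

lemma prod_bit_sign:
  "finite Q \<Longrightarrow> (\<Prod>j\<in>Q. if w j = (1::bit) then -1 else 1::complex) = (if sum w Q = 1 then -1 else 1)"
proof (induction Q rule: finite_induct)
  case (insert x F)
  then show ?case by (cases "w x"; cases "sum w F") simp_all
qed simp

lemma pauli_apply_commute:
  assumes "finite Q"
  shows "pauli_apply Q f (pauli_apply Q g v) y =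
     (if symp Q f g = 1 then -1 else 1) * pauli_apply Q g (pauli_apply Q f v) y"
proof (cases "y \<in> qbasis Q")
  case True
  let ?p = "pauli_flip Q" and ?sgn = "\<lambda>b::bit. if b = 1 then -1 else 1::complex"
  have phase_commute:
    "pauli_phase (a1, b1) (p \<noteq> (a1 = 1)) * pauli_phase (a2, b2) ((p \<noteq> (a1 = 1)) \<noteq> (a2 = 1)) =
     ?sgn (a1 * b2 + b1 * a2) *
       (pauli_phase (a2, b2) (p \<noteq> (a2 = 1)) * pauli_phase (a1, b1) ((p \<noteq> (a2 = 1)) \<noteq> (a1 = 1)))"
    for a1 b1 a2 b2 p
    by (cases a1; cases b1; cases a2; cases b2; cases p) (simp_all add: pauli_phase_def)
  have "pauli_coeff Q f y * pauli_coeff Q g (?p f y) =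
      (\<Prod>j\<in>Q. pauli_phase (f j) (?p f y j) * pauli_phase (g j) (?p g (?p f y) j))"
    by (simp add: pauli_coeff_def prod.distrib)
  also have "\<dots> = (\<Prod>j\<in>Q. ?sgn (fst (f j) * snd (g j) + snd (f j) * fst (g j)) *
        (pauli_phase (g j) (?p g y j) * pauli_phase (f j) (?p f (?p g y) j)))"
    using phase_commute[of "fst (f j)" "snd (f j)" "y j" "fst (g j)" "snd (g j)" for j]
    by (intro prod.cong refl) (simp add: pauli_flip_def)
  also have "\<dots> = ?sgn (symp Q f g) * (pauli_coeff Q g y * pauli_coeff Q f (?p g y))"
    by (simp only: prod.distrib pauli_coeff_def prod_bit_sign[OF assms] symp_def)
  finally show ?thesis
    using True by (simp add: pauli_apply_eq pauli_flip_in_qbasis pauli_flip_commute[of Q f g] mult.assoc)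
qed (simp add: pauli_apply_eq)

lemma pauli_apply_merge:
  assumes "finite A" "finite B" "A \<inter> B = {}" "\<forall>j\<in>A. f j = (0, 0)" "x \<in> qbasis B" "z \<in> qbasis A"
  shows "pauli_apply (A \<union> B) f v (merge x z) = pauli_apply B f (\<lambda>x'. v (merge x' z)) x"
proof -
  have flip: "pauli_flip (A \<union> B) f (merge x z) = merge (pauli_flip B f x) z"
    using assms(3-6) by (auto simp: pauli_flip_def merge_def qbasis_def fun_eq_iff) (metis fst_conv)
  have "pauli_coeff (A \<union> B) f (merge x z) =
      (\<Prod>j\<in>A. pauli_phase (f j) (pauli_flip (A \<union> B) f (merge x z) j)) *
      (\<Prod>j\<in>B. pauli_phase (f j) (pauli_flip (A \<union> B) f (merge x z) j))"
    unfolding pauli_coeff_def using assms(1-3) by (rule prod.union_disjoint)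
  also have "(\<Prod>j\<in>A. pauli_phase (f j) (pauli_flip (A \<union> B) f (merge x z) j)) = 1"
    using assms(4) by (intro prod.neutral) (simp add: pauli_phase_def)
  also have "(\<Prod>j\<in>B. pauli_phase (f j) (pauli_flip (A \<union> B) f (merge x z) j)) = pauli_coeff B f x"
    unfolding pauli_coeff_def flip using assms(3,6)
    by (intro prod.cong) (auto simp: merge_def qbasis_def)
  finally show ?thesis
    using assms(5,6) by (simp add: pauli_apply_eq flip merge_in_qbasis[of z A x B, simplified merge_commute])
qed

lemma pauli_apply_tensor_vec:
  assumes "finite Q1" "finite Q2" "Q1 \<inter> Q2 = {}" "pauli_on Q2 t"
  shows "pauli_apply (Q1 \<union> Q2) t (tensor_vec Q1 Q2 \<psi> \<phi>) = tensor_vec Q1 Q2 \<psi> (pauli_apply Q2 t \<phi>)"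
proof
  fix y
  show "pauli_apply (Q1 \<union> Q2) t (tensor_vec Q1 Q2 \<psi> \<phi>) y = tensor_vec Q1 Q2 \<psi> (pauli_apply Q2 t \<phi>) y"
  proof (cases "y \<in> qbasis (Q1 \<union> Q2)")
    case True
    then obtain x z where x: "x \<in> qbasis Q1" and z: "z \<in> qbasis Q2" and y: "y = merge x z"
      by (rule qbasis_UnE)
    have "pauli_apply (Q1 \<union> Q2) t (tensor_vec Q1 Q2 \<psi> \<phi>) y =
        pauli_apply Q2 t (\<lambda>z'. tensor_vec Q1 Q2 \<psi> \<phi> (merge z' x)) z"
      unfolding y merge_commute[of x z]
      by (rule pauli_apply_merge[OF assms(1-3) _ z x]) (use assms(3,4) in \<open>auto simp: pauli_on_def\<close>)
    also have "\<dots> = tensor_vec Q1 Q2 \<psi> (pauli_apply Q2 t \<phi>) y"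
      using x z assms(3) pauli_flip_in_qbasis[of Q2 t z]
      by (simp add: y pauli_apply_eq merge_commute[of _ x] tensor_vec_merge)
    finally show ?thesis .
  qed (simp add: pauli_apply_eq tensor_vec_def)
qed

definition pauli_expect :: "nat set \<Rightarrow> pauli_label \<Rightarrow> qop \<Rightarrow> complex" where
  "pauli_expect Q g \<rho> = (\<Sum>x\<in>qbasis Q. pauli_apply Q g (\<lambda>z. \<rho> z x) x)"

lemma pauli_expect_ptrace:
  assumes "finite Q" "\<forall>j\<in>A. g j = (0, 0)"
  shows "pauli_expect Q g \<rho> = pauli_expect (Q - A) g (ptrace Q A \<rho>)"
proof -
  have Q: "Q = (Q \<inter> A) \<union> (Q - A)" and Q': "(Q - A) \<union> (Q \<inter> A) = Q" by blast+
  have "pauli_expect Q g \<rho> = (\<Sum>x\<in>qbasis (Q - A). \<Sum>z\<in>qbasis (Q \<inter> A).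
       pauli_apply Q g (\<lambda>w. \<rho> w (merge x z)) (merge x z))"
    unfolding pauli_expect_def by (subst Q'[symmetric], rule sum_qbasis_Un) blast
  also have "\<dots> = (\<Sum>x\<in>qbasis (Q - A). \<Sum>z\<in>qbasis (Q \<inter> A).
       pauli_coeff (Q - A) g x * \<rho> (merge (pauli_flip (Q - A) g x) z) (merge x z))"
  proof (intro sum.cong refl)
    fix x z assume x: "x \<in> qbasis (Q - A)" and z: "z \<in> qbasis (Q \<inter> A)"
    have "pauli_apply ((Q \<inter> A) \<union> (Q - A)) g (\<lambda>w. \<rho> w (merge x z)) (merge x z) =
        pauli_apply (Q - A) g (\<lambda>x'. \<rho> (merge x' z) (merge x z)) x"
      by (rule pauli_apply_merge[OF _ _ _ _ x z]) (use assms in auto)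
    then show "pauli_apply Q g (\<lambda>w. \<rho> w (merge x z)) (merge x z) =
       pauli_coeff (Q - A) g x * \<rho> (merge (pauli_flip (Q - A) g x) z) (merge x z)"
      using x Q by (simp add: pauli_apply_eq)
  qed
  also have "\<dots> = pauli_expect (Q - A) g (ptrace Q A \<rho>)"
    unfolding pauli_expect_def
    by (intro sum.cong refl) (simp add: pauli_apply_eq ptrace_def pauli_flip_in_qbasis sum_distrib_left)
  finally show ?thesis .
qed

lemma pauli_expect_proj:
  assumes "unit_vec Q \<psi>" "pauli_apply Q t \<psi> = (\<lambda>x. e * \<psi> x)"
  shows "pauli_expect Q t (proj \<psi>) = e"
proof -
  have "pauli_expect Q t (proj \<psi>) = (\<Sum>x\<in>qbasis Q. cnj (\<psi> x) * pauli_apply Q t \<psi> x)"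
    unfolding pauli_expect_def proj_def by (intro sum.cong refl) (simp add: pauli_apply_eq)
  also have "\<dots> = e * braket Q \<psi> \<psi>"
    by (simp add: assms(2) braket_def sum_distrib_left algebra_simps)
  finally show ?thesis using braket_self_unit[OF assms(1)] by simp
qed

section \<open>Density operators\<close>

definition op_form :: "nat set \<Rightarrow> qop \<Rightarrow> qvec \<Rightarrow> qvec \<Rightarrow> complex" where
  "op_form Q \<rho> v u = (\<Sum>x\<in>qbasis Q. \<Sum>y\<in>qbasis Q. cnj (v x) * \<rho> x y * u y)"

definition ket :: "cfg \<Rightarrow> qvec" where
  "ket a = (\<lambda>z. if z = a then 1 else 0)"

lemma sum_qbasis_mult_ket:
  assumes "finite Q" "x \<in> qbasis Q"
  shows "(\<Sum>b\<in>qbasis Q. f b * ket x b) = f x"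
proof -
  have "(\<Sum>b\<in>qbasis Q. f b * ket x b) = (\<Sum>b\<in>qbasis Q. if b = x then f x else 0)"
    by (intro sum.cong refl) (simp add: ket_def)
  then show ?thesis using assms by (simp add: finite_qbasis)
qed

lemma density_op_form: "density Q \<rho> \<Longrightarrow> Im (op_form Q \<rho> v v) = 0 \<and> Re (op_form Q \<rho> v v) \<ge> 0"
  by (simp add: density_def op_form_def)

lemma op_form_add:
  "op_form Q \<rho> (\<lambda>x. u x + t * v x) (\<lambda>x. u x + t * v x) =
     op_form Q \<rho> u u + cnj t * op_form Q \<rho> v u + t * op_form Q \<rho> u v + cnj t * t * op_form Q \<rho> v v"
proof -
  have "op_form Q \<rho> (\<lambda>x. u x + t * v x) (\<lambda>x. u x + t * v x) =
    (\<Sum>x\<in>qbasis Q. \<Sum>y\<in>qbasis Q. cnj (u x) * \<rho> x y * u y + cnj t * (cnj (v x) * \<rho> x y * u y)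
       + t * (cnj (u x) * \<rho> x y * v y) + cnj t * t * (cnj (v x) * \<rho> x y * v y))"
    unfolding op_form_def by (intro sum.cong refl) (simp add: algebra_simps)
  then show ?thesis by (simp add: op_form_def sum.distrib sum_distrib_left)
qed

lemma op_form_ket:
  assumes "finite Q" "a \<in> qbasis Q" "b \<in> qbasis Q"
  shows "op_form Q \<rho> (ket a) (ket b) = \<rho> a b"
proof -
  have "op_form Q \<rho> (ket a) (ket b) =
      (\<Sum>x\<in>qbasis Q. if x = a then (\<Sum>y\<in>qbasis Q. if y = b then \<rho> a b else 0) else 0)"
    unfolding op_form_def ket_def by (intro sum.cong refl) (auto intro: sum.cong)
  then show ?thesis using assms by (simp add: finite_qbasis)
qed

lemma op_form_hermitian:
  assumes "density Q \<rho>"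
  shows "op_form Q \<rho> u v = cnj (op_form Q \<rho> v u)"
proof -
  have real_part: "Im (op_form Q \<rho> u u + cnj t * op_form Q \<rho> v u + t * op_form Q \<rho> u v
      + cnj t * t * op_form Q \<rho> v v) = 0" for t
    using density_op_form[OF assms, of "\<lambda>x. u x + t * v x"] by (simp only: op_form_add)
  have "Im (op_form Q \<rho> u u) = 0" "Im (op_form Q \<rho> v v) = 0"
    using density_op_form[OF assms] by auto
  then show ?thesis
    using real_part[of 1] real_part[of \<i>] by (simp add: complex_eq_iff)
qed

lemma density_hermitian:
  assumes "finite Q" "density Q \<rho>"
  shows "\<rho> x y = cnj (\<rho> y x)"
proof (cases "x \<in> qbasis Q \<and> y \<in> qbasis Q")
  case True
  then show ?thesis
    using op_form_hermitian[OF assms(2), of "ket x" "ket y"] op_form_ket[OF assms(1)] by simp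
next
  case False
  then show ?thesis using assms(2) by (auto simp: density_def is_op_def)
qed

text \<open>Minimising the form along u + t v with t = -r op_form v u for small r > 0 gives a negative value
  unless op_form v u = 0.\<close>
lemma density_op_form_null:
  assumes "density Q \<rho>" "op_form Q \<rho> u u = 0"
  shows "op_form Q \<rho> v u = 0"
proof (rule ccontr)
  define X where "X = op_form Q \<rho> v u"
  define N where "N = (cmod X)\<^sup>2"
  define R where "R = Re (op_form Q \<rho> v v)"
  define r where "r = 1 / (R + 1)"
  define t where "t = - (complex_of_real r * X)"
  assume "op_form Q \<rho> v u \<noteq> 0"
  then have N: "N > 0" by (simp add: X_def N_def)
  have XX: "X * cnj X = complex_of_real N" by (simp only: N_def complex_norm_square)
  have R: "R \<ge> 0" and vv: "op_form Q \<rho> v v = complex_of_real R"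
    using density_op_form[OF assms(1), of v] by (auto simp: R_def complex_eq_iff)
  have r: "r > 0" "r * R \<le> 1" using R by (auto simp: r_def field_simps)
  have "op_form Q \<rho> (\<lambda>x. u x + t * v x) (\<lambda>x. u x + t * v x) =
      cnj t * X + t * cnj X + cnj t * t * complex_of_real R"
    by (simp add: op_form_add assms(2) op_form_hermitian[OF assms(1), of u v] vv X_def)
  also have "\<dots> = complex_of_real (r * N * (r * R - 2))"
    unfolding t_def by (simp add: algebra_simps XX[symmetric])
  finally have "Re (op_form Q \<rho> (\<lambda>x. u x + t * v x) (\<lambda>x. u x + t * v x)) = r * N * (r * R - 2)"
    by simp
  moreover have "r * N * (r * R - 2) < 0"
    using r N by (intro mult_pos_neg) auto
  ultimately show False using density_op_form[OF assms(1)] by (metis not_le)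
qed

lemma density_op_form_kernel:
  assumes "finite Q" "density Q \<rho>" "op_form Q \<rho> u u = 0" "a \<in> qbasis Q"
  shows "(\<Sum>b\<in>qbasis Q. \<rho> a b * u b) = 0"
proof -
  define v where "v a = (\<Sum>b\<in>qbasis Q. \<rho> a b * u b)" for a
  have "complex_of_real (\<Sum>x\<in>qbasis Q. (cmod (v x))\<^sup>2) = (\<Sum>x\<in>qbasis Q. cnj (v x) * v x)"
    unfolding of_real_sum by (intro sum.cong refl) (metis complex_norm_square mult.commute)
  also have "\<dots> = op_form Q \<rho> v u"
    unfolding op_form_def by (intro sum.cong refl) (simp add: v_def sum_distrib_left mult.assoc)
  also have "\<dots> = 0" using density_op_form_null[OF assms(2,3)] .
  finally have "\<forall>x\<in>qbasis Q. (cmod (v x))\<^sup>2 = 0"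
    using assms(1) by (simp add: sum_nonneg_eq_0_iff finite_qbasis del: of_real_sum)
  then show ?thesis using assms(4) by (simp add: v_def)
qed

lemma density_sum_op_form_eq_0:
  assumes "finite Q" "density Q \<rho>" "finite I" "(\<Sum>i\<in>I. op_form Q \<rho> (w i) (w i)) = 0"
    and "i \<in> I" "a \<in> qbasis Q"
  shows "(\<Sum>b\<in>qbasis Q. \<rho> a b * w i b) = 0"
proof -
  have "(\<Sum>i\<in>I. Re (op_form Q \<rho> (w i) (w i))) = 0"
    using assms(4) by (simp flip: Re_sum)
  then have "Re (op_form Q \<rho> (w i) (w i)) = 0"
    using assms(3,5) density_op_form[OF assms(2)] by (simp add: sum_nonneg_eq_0_iff)
  then have "op_form Q \<rho> (w i) (w i) = 0"
    using density_op_form[OF assms(2)] by (simp add: complex_eq_iff)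
  then show ?thesis by (rule density_op_form_kernel[OF assms(1,2) _ assms(6)])
qed

text \<open>This says rho = e rho sigma(t). With w x = ket x - e sigma(t) ket x, the sum over x of the
  forms of w x equals 2 - 2 e Tr(sigma(t) rho) = 0, so rho annihilates every w x.\<close>
lemma density_right_pauli_eigen:
  assumes fin: "finite Q" and den: "density Q \<rho>" and e: "e \<in> {1, -1}"
    and expect: "pauli_expect Q t \<rho> = e" and a: "a \<in> qbasis Q" and x: "x \<in> qbasis Q"
  shows "\<rho> a x = e * cnj (pauli_coeff Q t x) * \<rho> a (pauli_flip Q t x)"
proof -
  define c where "c = pauli_coeff Q t"
  define p where "p = pauli_flip Q t"
  define k where "k x = e * cnj (c x)" for x
  define w where "w x = (\<lambda>z. ket x z - k x * ket (p x) z)" for x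
  have ee: "e * e = 1" and ce: "cnj e = e" using e by auto
  have cc: "cnj (c x) * c x = 1" "c x * cnj (c x) = 1" for x
    using cnj_pauli_coeff_mult[of Q t x] by (simp_all add: c_def mult.commute)
  have p_in: "p x \<in> qbasis Q" for x by (simp add: p_def pauli_flip_in_qbasis)
  have tr: "(\<Sum>x\<in>qbasis Q. \<rho> x x) = 1" "(\<Sum>x\<in>qbasis Q. \<rho> (p x) (p x)) = 1"
    using den sum_qbasis_pauli_flip[of "\<lambda>x. \<rho> x x" Q t] by (simp_all add: density_def p_def)
  have ex1: "(\<Sum>x\<in>qbasis Q. c x * \<rho> (p x) x) = e"
    using expect unfolding pauli_expect_def by (simp add: pauli_apply_eq c_def p_def)
  have ex2: "(\<Sum>x\<in>qbasis Q. cnj (c x) * \<rho> x (p x)) = e"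
  proof -
    have "(\<Sum>x\<in>qbasis Q. cnj (c x) * \<rho> x (p x)) = (\<Sum>x\<in>qbasis Q. cnj (c (p x)) * \<rho> (p x) (p (p x)))"
      using sum_qbasis_pauli_flip[of "\<lambda>x. cnj (c x) * \<rho> x (p x)" Q t] by (simp add: p_def)
    also have "\<dots> = (\<Sum>x\<in>qbasis Q. c x * \<rho> (p x) x)"
      by (intro sum.cong refl) (simp add: p_def c_def pauli_coeff_flip pauli_flip_flip)
    finally show ?thesis using ex1 by simp
  qed
  have form_w: "op_form Q \<rho> (w x) (w x) =
      \<rho> x x - e * (c x * \<rho> (p x) x) - e * (cnj (c x) * \<rho> x (p x)) + \<rho> (p x) (p x)"
    if x: "x \<in> qbasis Q" for x
  proof -
    have "op_form Q \<rho> (w x) (w x) = \<rho> x x + cnj (- k x) * \<rho> (p x) x + (- k x) * \<rho> x (p x)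
          + cnj (- k x) * (- k x) * \<rho> (p x) (p x)"
      using op_form_add[of Q \<rho> "ket x" "- k x" "ket (p x)"] op_form_ket[OF fin] x p_in
      by (simp add: w_def)
    then show ?thesis by (simp add: k_def ce algebra_simps ee cc)
  qed
  have forms_sum: "(\<Sum>x\<in>qbasis Q. op_form Q \<rho> (w x) (w x)) = 0"
    by (simp add: form_w sum.distrib sum_subtractf flip: sum_distrib_left) (simp add: tr ex1 ex2 ee)
  have "0 = (\<Sum>b\<in>qbasis Q. \<rho> a b * w x b)"
    using density_sum_op_form_eq_0[OF fin den finite_qbasis[OF fin] forms_sum x a] by simp
  also have "\<dots> = (\<Sum>b\<in>qbasis Q. \<rho> a b * ket x b) - k x * (\<Sum>b\<in>qbasis Q. \<rho> a b * ket (p x) b)"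
    by (simp add: w_def algebra_simps sum_subtractf sum_distrib_left)
  also have "\<dots> = \<rho> a x - k x * \<rho> a (p x)"
    using x p_in[of x] by (simp add: sum_qbasis_mult_ket[OF fin])
  finally show ?thesis by (simp add: k_def c_def p_def)
qed

lemma density_pauli_eigen:
  assumes fin: "finite Q" and den: "density Q \<rho>" and e: "e \<in> {1, -1}"
    and expect: "pauli_expect Q t \<rho> = e"
  shows "pauli_apply Q t (\<lambda>x. \<rho> x y) = (\<lambda>x. e * \<rho> x y)"
proof
  fix x
  let ?c = "pauli_coeff Q t x" and ?p = "pauli_flip Q t x"
  show "pauli_apply Q t (\<lambda>x. \<rho> x y) x = e * \<rho> x y"
  proof (cases "x \<in> qbasis Q \<and> y \<in> qbasis Q")
    case True
    have ee: "e * e = 1" and ce: "cnj e = e" using e by auto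
    have "\<rho> x y = cnj (e * cnj ?c * \<rho> y ?p)"
      using density_right_pauli_eigen[OF fin den e expect] True density_hermitian[OF fin den, of x y]
      by simp
    also have "\<dots> = e * ?c * \<rho> ?p y"
      using density_hermitian[OF fin den, of ?p y] by (simp add: ce)
    finally show ?thesis using True by (simp add: pauli_apply_eq ee mult.assoc[symmetric])
  next
    case False
    then show ?thesis using den by (auto simp: pauli_apply_eq density_def is_op_def)
  qed
qed

section \<open>Completeness of the Pauli operators\<close>

lemma qbasis_singleton: "qbasis {q} = {(\<lambda>i. False), (\<lambda>i. i = q)}"
  by (auto simp: qbasis_def fun_eq_iff)

lemma sum_qbasis_prod:
  assumes "finite Q"
  shows "(\<Sum>b\<in>qbasis Q. \<Prod>j\<in>Q. g j (b j)) = (\<Prod>j\<in>Q. g j False + g j True :: complex)"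
  using assms
proof (induction Q rule: finite_induct)
  case empty
  have "qbasis {} = {\<lambda>i. False}" by (auto simp: qbasis_def)
  then show ?case by simp
next
  case (insert q F)
  have merge_q: "(\<Prod>j\<in>insert q F. g j (merge x z j)) = g q (z q) * (\<Prod>j\<in>F. g j (x j))"
    if "x \<in> qbasis F" "z \<in> qbasis {q}" for x z
  proof -
    have "(\<Prod>j\<in>F. g j (merge x z j)) = (\<Prod>j\<in>F. g j (x j))"
      using that insert by (intro prod.cong refl) (auto simp: merge_def qbasis_def)
    moreover have "merge x z q = z q" using that insert by (auto simp: merge_def qbasis_def)
    ultimately show ?thesis using insert by simp
  qed
  have "(\<Sum>b\<in>qbasis (F \<union> {q}). \<Prod>j\<in>insert q F. g j (b j)) =
      (\<Sum>x\<in>qbasis F. \<Sum>z\<in>qbasis {q}. \<Prod>j\<in>insert q F. g j (merge x z j))"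
    by (rule sum_qbasis_Un) (use insert in auto)
  also have "\<dots> = (\<Sum>x\<in>qbasis F. \<Sum>z\<in>qbasis {q}. g q (z q) * (\<Prod>j\<in>F. g j (x j)))"
    by (intro sum.cong refl) (simp add: merge_q)
  also have "\<dots> = (\<Sum>x\<in>qbasis F. (g q False + g q True) * (\<Prod>j\<in>F. g j (x j)))"
    by (intro sum.cong refl) (simp add: qbasis_singleton fun_eq_iff distrib_right)
  also have "\<dots> = (g q False + g q True) * (\<Sum>x\<in>qbasis F. \<Prod>j\<in>F. g j (x j))"
    by (simp add: sum_distrib_left)
  finally show ?case using insert by simp
qed

definition parity_char :: "nat set \<Rightarrow> cfg \<Rightarrow> cfg \<Rightarrow> complex" where
  "parity_char Q b x = (\<Prod>j\<in>Q. if b j \<and> x j then -1 else 1)"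

lemma sum_parity_char_mult:
  assumes "finite Q" "x \<in> qbasis Q" "z \<in> qbasis Q"
  shows "(\<Sum>b\<in>qbasis Q. parity_char Q b x * parity_char Q b z) = (if x = z then 2 ^ card Q else 0)"
proof -
  let ?g = "\<lambda>j p. (if p \<and> x j then -1 else 1) * (if p \<and> z j then -1 else 1 :: complex)"
  have "(\<Sum>b\<in>qbasis Q. parity_char Q b x * parity_char Q b z) = (\<Prod>j\<in>Q. ?g j False + ?g j True)"
    unfolding parity_char_def prod.distrib[symmetric] by (rule sum_qbasis_prod[OF assms(1)])
  also have "\<dots> = (if x = z then 2 ^ card Q else 0)"
  proof (cases "x = z")
    case False
    then obtain j where "x j \<noteq> z j" by (auto simp: fun_eq_iff)
    moreover from this have "j \<in> Q" using assms(2,3) by (auto simp: qbasis_def)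
    ultimately show ?thesis using False assms(1) by (auto intro: prod_zero)
  next
    case True
    then have "(\<Prod>j\<in>Q. ?g j False + ?g j True) = (\<Prod>j\<in>Q. 2)" by (intro prod.cong refl) auto
    then show ?thesis using True by simp
  qed
  finally show ?thesis .
qed

lemma parity_char_fourier_inversion:
  assumes fin: "finite Q" and fourier: "\<And>b. b \<in> qbasis Q \<Longrightarrow> (\<Sum>y\<in>qbasis Q. h y * parity_char Q b y) = 0"
    and z: "z \<in> qbasis Q"
  shows "h z = 0"
proof -
  have "0 = (\<Sum>b\<in>qbasis Q. parity_char Q b z * (\<Sum>y\<in>qbasis Q. h y * parity_char Q b y))"
    using fourier by simp
  also have "\<dots> = (\<Sum>b\<in>qbasis Q. \<Sum>y\<in>qbasis Q. h y * (parity_char Q b y * parity_char Q b z))"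
    by (simp add: sum_distrib_left algebra_simps)
  also have "\<dots> = (\<Sum>y\<in>qbasis Q. h y * (\<Sum>b\<in>qbasis Q. parity_char Q b y * parity_char Q b z))"
    by (subst sum.swap) (simp add: sum_distrib_left)
  also have "\<dots> = (\<Sum>y\<in>qbasis Q. if y = z then h y * 2 ^ card Q else 0)"
    by (intro sum.cong refl) (simp add: sum_parity_char_mult[OF fin _ z])
  also have "\<dots> = h z * 2 ^ card Q" using z fin finite_qbasis by simp
  finally show ?thesis by simp
qed

text \<open>The Pauli operators span all operators. Fix the X-part to y0 + z0; varying the Z-part b
  gives the vanishing of all Fourier coefficients of a function of the basis states.\<close>
lemma pauli_operators_complete:
  assumes fin: "finite Q"
    and orth: "\<And>f. pauli_on Q f \<Longrightarrow> braket Q \<phi> (pauli_apply Q f u) = 0"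
    and y0: "y0 \<in> qbasis Q" and z0: "z0 \<in> qbasis Q"
  shows "cnj (\<phi> y0) * u z0 = 0"
proof -
  define a where "a = (\<lambda>j. y0 j \<noteq> z0 j)"
  define fl where "fl = (\<lambda>y::cfg. \<lambda>i. i \<in> Q \<and> (y i \<noteq> a i))"
  define h where "h y = cnj (\<phi> (fl y)) * u y" for y
  define f where "f b = (\<lambda>j. (of_bool (a j) :: bit, of_bool (b j) :: bit))" for b :: cfg
  define K where "K b = (\<Prod>j\<in>Q. if a j \<and> b j then \<i> else (1::complex))" for b :: cfg
  have fl_fl: "fl (fl y) = y" if "y \<in> qbasis Q" for y
    using that by (auto simp: fl_def qbasis_def fun_eq_iff)
  have flip: "pauli_flip Q (f b) = fl" for b by (auto simp: pauli_flip_def fl_def f_def fun_eq_iff)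
  have coeff: "pauli_coeff Q (f b) y = K b * parity_char Q b (fl y)" for b y
    unfolding pauli_coeff_def flip K_def parity_char_def
    by (simp add: prod.distrib[symmetric] pauli_phase_def f_def)
  have "K b \<noteq> 0" for b by (simp add: K_def fin)
  have fourier: "(\<Sum>y\<in>qbasis Q. h y * parity_char Q b y) = 0" if b: "b \<in> qbasis Q" for b
  proof -
    have "pauli_on Q (f b)" using b y0 z0 by (auto simp: pauli_on_def f_def a_def qbasis_def)
    then have "0 = braket Q \<phi> (pauli_apply Q (f b) u)" by (rule orth[symmetric])
    also have "\<dots> = K b * (\<Sum>y\<in>qbasis Q. cnj (\<phi> y) * parity_char Q b (fl y) * u (fl y))"
      by (simp add: braket_def sum_distrib_left pauli_apply_eq coeff flip algebra_simps)
    also have "(\<Sum>y\<in>qbasis Q. cnj (\<phi> y) * parity_char Q b (fl y) * u (fl y)) =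
        (\<Sum>y\<in>qbasis Q. h y * parity_char Q b y)"
      using sum_qbasis_pauli_flip[of "\<lambda>y. cnj (\<phi> y) * parity_char Q b (fl y) * u (fl y)" Q "f b"]
      by (simp add: flip fl_fl h_def mult_ac cong: sum.cong)
    finally show ?thesis using \<open>K b \<noteq> 0\<close> by simp
  qed
  have "h z0 = 0" by (rule parity_char_fourier_inversion[OF fin fourier z0])
  moreover have "fl z0 = y0" using y0 z0 by (auto simp: fl_def a_def qbasis_def fun_eq_iff)
  ultimately show ?thesis by (simp add: h_def)
qed

section \<open>Vectors stabilized by a generating set\<close>

definition stabilizes :: "nat set \<Rightarrow> (pauli_label \<Rightarrow> complex) \<Rightarrow> pauli_label set \<Rightarrow> qvec \<Rightarrow> bool" where
  "stabilizes Q \<epsilon> T u \<longleftrightarrow> (\<forall>t\<in>T. pauli_apply Q t u = (\<lambda>x. \<epsilon> t * u x))"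

text \<open>For f in S use that phi is an eigenvector of sigma(f); otherwise some t in T anticommutes
  with f, and moving sigma(t) from w across sigma(f) onto phi changes the sign.\<close>
lemma braket_pauli_apply_eq_0:
  assumes fin: "finite Q" and signs: "\<forall>f\<in>S. \<epsilon> f \<in> {1, -1}" and stab: "stabilizes Q \<epsilon> S \<phi>"
    and TS: "T \<subseteq> S" and gen: "\<And>f. pauli_on Q f \<Longrightarrow> \<forall>t\<in>T. symp Q f t = 0 \<Longrightarrow> f \<in> S"
    and w: "stabilizes Q \<epsilon> T w" and orth: "braket Q \<phi> w = 0" and f: "pauli_on Q f"
  shows "braket Q \<phi> (pauli_apply Q f w) = 0"
proof (cases "f \<in> S")
  case True
  have "braket Q \<phi> (pauli_apply Q f w) = braket Q (pauli_apply Q f \<phi>) w"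
    by (rule pauli_apply_adjoint)
  also have "\<dots> = cnj (\<epsilon> f) * braket Q \<phi> w"
    using True stab by (simp add: stabilizes_def braket_def sum_distrib_left mult.assoc)
  finally show ?thesis using orth by simp
next
  case False
  then obtain t where t: "t \<in> T" and "symp Q f t \<noteq> 0" using gen[OF f] by blast
  then have anti: "symp Q f t = 1" by simp
  have "\<epsilon> t \<in> {1, -1}" using signs TS t by auto
  then have ce: "cnj (\<epsilon> t) = \<epsilon> t" by auto
  have t\<phi>: "pauli_apply Q t \<phi> = (\<lambda>x. \<epsilon> t * \<phi> x)" using stab t TS by (auto simp: stabilizes_def)
  have ftw: "pauli_apply Q f (pauli_apply Q t w) = (\<lambda>x. \<epsilon> t * pauli_apply Q f w x)"
    using w t by (simp add: stabilizes_def pauli_apply_scale)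
  have "\<epsilon> t * braket Q \<phi> (pauli_apply Q f w) = braket Q \<phi> (pauli_apply Q f (pauli_apply Q t w))"
    by (simp add: ftw braket_def sum_distrib_left mult.left_commute)
  also have "\<dots> = - braket Q \<phi> (pauli_apply Q t (pauli_apply Q f w))"
    by (simp add: pauli_apply_commute[OF fin, of f t] anti braket_def sum_negf)
  also have "braket Q \<phi> (pauli_apply Q t (pauli_apply Q f w)) = braket Q (pauli_apply Q t \<phi>) (pauli_apply Q f w)"
    by (rule pauli_apply_adjoint)
  also have "\<dots> = \<epsilon> t * braket Q \<phi> (pauli_apply Q f w)"
    by (simp add: t\<phi> ce braket_def sum_distrib_left mult.assoc)
  finally have "\<epsilon> t * braket Q \<phi> (pauli_apply Q f w) = 0" by simp
  then show ?thesis using \<open>\<epsilon> t \<in> {1, -1}\<close> by auto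
qed

lemma stabilizes_eq_multiple:
  assumes fin: "finite Q" and unit: "unit_vec Q \<phi>"
    and signs: "\<forall>f\<in>S. \<epsilon> f \<in> {1, -1}" and stab: "stabilizes Q \<epsilon> S \<phi>"
    and TS: "T \<subseteq> S" and gen: "\<And>f. pauli_on Q f \<Longrightarrow> \<forall>t\<in>T. symp Q f t = 0 \<Longrightarrow> f \<in> S"
    and u: "is_vec Q u" "stabilizes Q \<epsilon> T u"
  shows "u = (\<lambda>z. braket Q \<phi> u * \<phi> z)"
proof -
  define w where "w = (\<lambda>x. u x - braket Q \<phi> u * \<phi> x)"
  have w: "stabilizes Q \<epsilon> T w"
    using u(2) stab TS unfolding stabilizes_def w_def pauli_apply_diff pauli_apply_scale
    by (auto simp: algebra_simps)
  have "braket Q \<phi> w = braket Q \<phi> u - braket Q \<phi> u * braket Q \<phi> \<phi>"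
    unfolding w_def braket_def
    by (simp add: right_diff_distrib sum_subtractf sum_distrib_left mult.left_commute)
  then have "braket Q \<phi> w = 0" using braket_self_unit[OF unit] by simp
  then have orth: "braket Q \<phi> (pauli_apply Q f w) = 0" if "pauli_on Q f" for f
    using braket_pauli_apply_eq_0[OF fin signs stab TS gen w _ that] by blast
  have "\<not> (\<forall>y\<in>qbasis Q. \<phi> y = 0)"
  proof
    assume "\<forall>y\<in>qbasis Q. \<phi> y = 0"
    then have "braket Q \<phi> \<phi> = 0" by (simp add: braket_def)
    then show False using braket_self_unit[OF unit] by simp
  qed
  then obtain y0 where y0: "y0 \<in> qbasis Q" "\<phi> y0 \<noteq> 0" by blast
  have "w z = 0" for z
  proof (cases "z \<in> qbasis Q")
    case True
    then show ?thesis using pauli_operators_complete[OF fin orth y0(1)] y0(2) by simp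
  next
    case False
    then show ?thesis using u(1) unit by (simp add: w_def is_vec_def unit_vec_def)
  qed
  then show ?thesis by (auto simp: w_def fun_eq_iff)
qed

section \<open>Tensor products with a pure state\<close>

lemma is_op_ptrace: "is_op (Q - A) (ptrace Q A \<rho>)"
  by (auto simp: is_op_def ptrace_def)

lemma trace_ptrace: "(\<Sum>x\<in>qbasis (Q - A). ptrace Q A \<rho> x x) = (\<Sum>x\<in>qbasis Q. \<rho> x x)"
proof -
  have "(\<Sum>x\<in>qbasis Q. \<rho> x x) = (\<Sum>x\<in>qbasis ((Q - A) \<union> (Q \<inter> A)). \<rho> x x)"
    by (simp add: Un_Diff_Int)
  also have "\<dots> = (\<Sum>x\<in>qbasis (Q - A). ptrace Q A \<rho> x x)"
    by (subst sum_qbasis_Un) (auto simp: ptrace_def)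
  finally show ?thesis ..
qed

lemma ptrace_tensor_op:
  assumes dis: "Q1 \<inter> Q2 = {}"
  shows "ptrace (Q1 \<union> Q2) A (tensor_op Q1 Q2 \<sigma> \<tau>) =
    tensor_op (Q1 - A) (Q2 - A) (ptrace Q1 A \<sigma>) (ptrace Q2 A \<tau>)"
proof (intro ext)
  fix x y
  have diff: "(Q1 \<union> Q2) - A = (Q1 - A) \<union> (Q2 - A)" and int: "(Q1 \<union> Q2) \<inter> A = (Q1 \<inter> A) \<union> (Q2 \<inter> A)"
    by blast+
  have dis': "(Q1 - A) \<inter> (Q2 - A) = {}" "(Q1 \<inter> A) \<inter> (Q2 \<inter> A) = {}" using dis by blast+
  show "ptrace (Q1 \<union> Q2) A (tensor_op Q1 Q2 \<sigma> \<tau>) x y =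
    tensor_op (Q1 - A) (Q2 - A) (ptrace Q1 A \<sigma>) (ptrace Q2 A \<tau>) x y"
  proof (cases "x \<in> qbasis ((Q1 - A) \<union> (Q2 - A)) \<and> y \<in> qbasis ((Q1 - A) \<union> (Q2 - A))")
    case True
    then obtain x1 x2 y1 y2 where x: "x1 \<in> qbasis (Q1 - A)" "x2 \<in> qbasis (Q2 - A)" "x = merge x1 x2"
      and y: "y1 \<in> qbasis (Q1 - A)" "y2 \<in> qbasis (Q2 - A)" "y = merge y1 y2"
      by (meson qbasis_UnE)
    have shuffle: "merge (merge a b) (merge c d) = merge (merge a c) (merge b d)" for a b c d
      by (auto simp: merge_def fun_eq_iff)
    have in_Q: "merge a z \<in> qbasis Q" if "a \<in> qbasis (Q - A)" "z \<in> qbasis (Q \<inter> A)" for a z Q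
      using merge_in_qbasis[OF that] by (simp add: Un_Diff_Int)
    have "ptrace (Q1 \<union> Q2) A (tensor_op Q1 Q2 \<sigma> \<tau>) x y =
       (\<Sum>z\<in>qbasis ((Q1 \<inter> A) \<union> (Q2 \<inter> A)). tensor_op Q1 Q2 \<sigma> \<tau> (merge x z) (merge y z))"
      using True by (simp add: ptrace_def diff int)
    also have "\<dots> = (\<Sum>z1\<in>qbasis (Q1 \<inter> A). \<Sum>z2\<in>qbasis (Q2 \<inter> A).
        \<sigma> (merge x1 z1) (merge y1 z1) * \<tau> (merge x2 z2) (merge y2 z2))"
      using x y dis by (simp add: sum_qbasis_Un[OF dis'(2)] shuffle tensor_op_merge in_Q)
    also have "\<dots> = tensor_op (Q1 - A) (Q2 - A) (ptrace Q1 A \<sigma>) (ptrace Q2 A \<tau>) x y"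
      using x y by (simp add: tensor_op_merge[OF dis'(1)] ptrace_def sum_product)
    finally show ?thesis .
  next
    case False
    then show ?thesis by (auto simp: ptrace_def tensor_op_def diff)
  qed
qed

lemma tensor_op_cancel_right:
  assumes dis: "A \<inter> B = {}" and "is_op A a" "is_op A b" and z: "z \<in> qbasis B" "\<tau> z z \<noteq> 0"
    and eq: "tensor_op A B a \<tau> = tensor_op A B b \<tau>"
  shows "a = b"
proof (intro ext)
  fix x y
  show "a x y = b x y"
  proof (cases "x \<in> qbasis A \<and> y \<in> qbasis A")
    case True
    have "a x y * \<tau> z z = b x y * \<tau> z z"
      using fun_cong[OF fun_cong[OF eq, of "merge x z"], of "merge y z"] True z
      by (simp add: tensor_op_merge[OF dis])
    then show ?thesis using z by simp
  next
    case False
    then show ?thesis using assms(2,3) by (auto simp: is_op_def)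
  qed
qed

lemma trace_tensor_proj:
  assumes dis: "Q1 \<inter> Q2 = {}" and unit: "unit_vec Q2 \<phi>"
  shows "(\<Sum>x\<in>qbasis (Q1 \<union> Q2). tensor_op Q1 Q2 \<sigma> (proj \<phi>) x x) = (\<Sum>x\<in>qbasis Q1. \<sigma> x x)"
proof -
  have "(\<Sum>x\<in>qbasis (Q1 \<union> Q2). tensor_op Q1 Q2 \<sigma> (proj \<phi>) x x) =
      (\<Sum>x\<in>qbasis Q1. \<sigma> x x * braket Q2 \<phi> \<phi>)"
    by (simp add: sum_qbasis_Un[OF dis] tensor_op_merge[OF dis] proj_def braket_def
        sum_distrib_left mult.commute)
  then show ?thesis using braket_self_unit[OF unit] by simp
qed

text \<open>Tracing out A commutes with tensoring by a pure state, and the marginal of the pure factor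
  has nonzero trace, so it can be cancelled.\<close>
lemma ptrace_tensor_proj_eq_iff:
  assumes dis: "Q1 \<inter> Q2 = {}" and unit: "unit_vec Q2 \<phi>"
  shows "ptrace (Q1 \<union> Q2) A (tensor_op Q1 Q2 \<sigma> (proj \<phi>)) =
      ptrace (Q1 \<union> Q2) A (tensor_op Q1 Q2 \<sigma>' (proj \<phi>)) \<longleftrightarrow> ptrace Q1 A \<sigma> = ptrace Q1 A \<sigma>'"
proof
  define \<tau> where "\<tau> = ptrace Q2 A (proj \<phi>)"
  have "(\<Sum>x\<in>qbasis (Q2 - A). \<tau> x x) = braket Q2 \<phi> \<phi>"
    by (simp add: \<tau>_def trace_ptrace braket_def proj_def mult.commute)
  then obtain z where z: "z \<in> qbasis (Q2 - A)" "\<tau> z z \<noteq> 0"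
    using braket_self_unit[OF unit] by (metis (no_types, lifting) sum.neutral zero_neq_one)
  assume "ptrace (Q1 \<union> Q2) A (tensor_op Q1 Q2 \<sigma> (proj \<phi>)) =
      ptrace (Q1 \<union> Q2) A (tensor_op Q1 Q2 \<sigma>' (proj \<phi>))"
  then have "tensor_op (Q1 - A) (Q2 - A) (ptrace Q1 A \<sigma>) \<tau> = tensor_op (Q1 - A) (Q2 - A) (ptrace Q1 A \<sigma>') \<tau>"
    by (simp add: ptrace_tensor_op[OF dis] \<tau>_def)
  moreover have "(Q1 - A) \<inter> (Q2 - A) = {}" using dis by blast
  ultimately show "ptrace Q1 A \<sigma> = ptrace Q1 A \<sigma>'"
    using tensor_op_cancel_right z is_op_ptrace by metis
qed (simp add: ptrace_tensor_op[OF dis])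

lemma op_form_tensor_proj:
  assumes dis: "Q1 \<inter> Q2 = {}"
  shows "op_form (Q1 \<union> Q2) (tensor_op Q1 Q2 \<sigma> (proj \<phi>)) V V =
    op_form Q1 \<sigma> (\<lambda>x. braket Q2 \<phi> (\<lambda>z. V (merge x z))) (\<lambda>x. braket Q2 \<phi> (\<lambda>z. V (merge x z)))"
proof -
  have "op_form (Q1 \<union> Q2) (tensor_op Q1 Q2 \<sigma> (proj \<phi>)) V V =
     (\<Sum>x\<in>qbasis Q1. \<Sum>z\<in>qbasis Q2. \<Sum>y\<in>qbasis Q1. \<Sum>z'\<in>qbasis Q2.
        cnj (V (merge x z)) * (\<sigma> x y * (\<phi> z * cnj (\<phi> z'))) * V (merge y z'))"
    unfolding op_form_def
    by (simp add: sum_qbasis_Un[OF dis] tensor_op_merge[OF dis] proj_def)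
  also have "\<dots> = (\<Sum>x\<in>qbasis Q1. \<Sum>y\<in>qbasis Q1. \<Sum>z\<in>qbasis Q2. \<Sum>z'\<in>qbasis Q2.
        cnj (V (merge x z)) * (\<sigma> x y * (\<phi> z * cnj (\<phi> z'))) * V (merge y z'))"
    by (rule sum.cong[OF refl]) (rule sum.swap)
  also have "\<dots> = op_form Q1 \<sigma> (\<lambda>x. braket Q2 \<phi> (\<lambda>z. V (merge x z))) (\<lambda>x. braket Q2 \<phi> (\<lambda>z. V (merge x z)))"
    unfolding op_form_def braket_def
    by (simp add: cnj_sum sum_distrib_left sum_distrib_right algebra_simps)
  finally show ?thesis .
qed

lemma density_tensor_proj_iff:
  assumes dis: "Q1 \<inter> Q2 = {}" and unit: "unit_vec Q2 \<phi>" and op: "is_op Q1 \<sigma>"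
  shows "density (Q1 \<union> Q2) (tensor_op Q1 Q2 \<sigma> (proj \<phi>)) \<longleftrightarrow> density Q1 \<sigma>"
proof -
  let ?\<rho> = "tensor_op Q1 Q2 \<sigma> (proj \<phi>)"
  have "op_form Q1 \<sigma> v v = op_form (Q1 \<union> Q2) ?\<rho> (tensor_vec Q1 Q2 v \<phi>) (tensor_vec Q1 Q2 v \<phi>)" for v
  proof -
    have "braket Q2 \<phi> (\<lambda>z. tensor_vec Q1 Q2 v \<phi> (merge x z)) = v x * braket Q2 \<phi> \<phi>"
      if "x \<in> qbasis Q1" for x
      using that by (simp add: braket_def tensor_vec_merge[OF dis] sum_distrib_left mult.left_commute)
    then show ?thesis
      unfolding op_form_tensor_proj[OF dis] by (simp add: op_form_def braket_self_unit[OF unit])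
  qed
  then have "(\<forall>V. Im (op_form (Q1 \<union> Q2) ?\<rho> V V) = 0 \<and> Re (op_form (Q1 \<union> Q2) ?\<rho> V V) \<ge> 0) \<longleftrightarrow>
      (\<forall>v. Im (op_form Q1 \<sigma> v v) = 0 \<and> Re (op_form Q1 \<sigma> v v) \<ge> 0)"
    by (metis op_form_tensor_proj[OF dis])
  moreover have "is_op (Q1 \<union> Q2) ?\<rho>" by (auto simp: is_op_def tensor_op_def)
  ultimately show ?thesis
    using op by (simp add: density_def op_form_def trace_tensor_proj[OF dis unit])
qed

section \<open>Marginals of a product with a stabilizer state\<close>

lemma stabilizes_tensor_slice:
  assumes fin: "finite Q1" "finite Q2" and dis: "Q1 \<inter> Q2 = {}" and unit: "unit_vec Q2 \<phi>"
    and signs: "\<forall>f\<in>S. \<epsilon> f \<in> {1, -1}" and stab: "stabilizes Q2 \<epsilon> S \<phi>"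
    and TS: "T \<subseteq> S" and gen: "\<And>f. pauli_on Q2 f \<Longrightarrow> \<forall>t\<in>T. symp Q2 f t = 0 \<Longrightarrow> f \<in> S"
    and T_on: "\<forall>t\<in>T. pauli_on Q2 t" and V: "stabilizes (Q1 \<union> Q2) \<epsilon> T V"
    and x: "x \<in> qbasis Q1" and z: "z \<in> qbasis Q2"
  shows "V (merge x z) = braket Q2 \<phi> (\<lambda>z'. V (merge x z')) * \<phi> z"
proof -
  define s where "s z' = (if z' \<in> qbasis Q2 then V (merge x z') else 0)" for z'
  have "stabilizes Q2 \<epsilon> T s"
    unfolding stabilizes_def
  proof (intro ballI ext)
    fix t z' assume t: "t \<in> T"
    have t_Q1: "\<forall>j\<in>Q1. t j = (0, 0)" using T_on t dis by (auto simp: pauli_on_def)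
    show "pauli_apply Q2 t s z' = \<epsilon> t * s z'"
    proof (cases "z' \<in> qbasis Q2")
      case True
      have "pauli_apply Q2 t (\<lambda>w. V (merge w x)) z' = pauli_apply (Q1 \<union> Q2) t V (merge z' x)"
        by (rule pauli_apply_merge[OF fin dis t_Q1 True x, symmetric])
      also have "\<dots> = \<epsilon> t * V (merge z' x)" using V t by (simp add: stabilizes_def)
      finally show ?thesis
        using True by (simp add: pauli_apply_eq s_def pauli_flip_in_qbasis merge_commute[of x])
    qed (simp add: pauli_apply_eq s_def)
  qed
  moreover have "is_vec Q2 s" by (simp add: s_def is_vec_def)
  ultimately have "s = (\<lambda>z'. braket Q2 \<phi> s * \<phi> z')"
    by (intro stabilizes_eq_multiple[OF fin(2) unit signs stab TS gen])
  moreover have "braket Q2 \<phi> s = braket Q2 \<phi> (\<lambda>z'. V (merge x z'))"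
    unfolding braket_def by (intro sum.cong refl) (simp add: s_def)
  ultimately show ?thesis using z by (metis s_def)
qed

text \<open>Each column of rho is a multiple of phi along Q2 by the previous lemma, and by Hermiticity so
  is each row.\<close>
lemma density_eq_tensor_proj:
  assumes fin: "finite Q1" "finite Q2" and dis: "Q1 \<inter> Q2 = {}" and den: "density (Q1 \<union> Q2) \<rho>"
    and unit: "unit_vec Q2 \<phi>" and signs: "\<forall>f\<in>S. \<epsilon> f \<in> {1, -1}" and stab: "stabilizes Q2 \<epsilon> S \<phi>"
    and TS: "T \<subseteq> S" and gen: "\<And>f. pauli_on Q2 f \<Longrightarrow> \<forall>t\<in>T. symp Q2 f t = 0 \<Longrightarrow> f \<in> S"
    and T_on: "\<forall>t\<in>T. pauli_on Q2 t" and cols: "\<And>y. stabilizes (Q1 \<union> Q2) \<epsilon> T (\<lambda>x. \<rho> x y)"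
  shows "\<rho> = tensor_op Q1 Q2 (ptrace (Q1 \<union> Q2) Q2 \<rho>) (proj \<phi>)"
proof -
  define C where "C x y = braket Q2 \<phi> (\<lambda>z. \<rho> (merge x z) y)" for x y
  define D where "D x y = braket Q2 \<phi> (\<lambda>z. cnj (C y (merge x z)))" for x y
  have col: "\<rho> (merge x z) y = C x y * \<phi> z" if "x \<in> qbasis Q1" "z \<in> qbasis Q2" for x z y
    unfolding C_def by (rule stabilizes_tensor_slice[OF fin dis unit signs stab TS gen T_on cols that])
  have entry: "\<rho> (merge x z) (merge y z') = D x y * (\<phi> z * cnj (\<phi> z'))"
    if x: "x \<in> qbasis Q1" and y: "y \<in> qbasis Q1" and z: "z \<in> qbasis Q2" and z': "z' \<in> qbasis Q2"
    for x y z z'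
  proof -
    have herm: "\<rho> (merge x w) (merge y z') = cnj (\<rho> (merge y z') (merge x w))" for w
      using fin by (intro density_hermitian[OF _ den]) simp
    have "C x (merge y z') = braket Q2 \<phi> (\<lambda>w. cnj (\<rho> (merge y z') (merge x w)))"
      by (simp only: C_def herm)
    also have "\<dots> = cnj (\<phi> z') * D x y"
      by (simp add: braket_def D_def col[OF y z'] sum_distrib_left algebra_simps)
    finally show ?thesis using col[OF x z] by (simp add: algebra_simps)
  qed
  have ptrace_eq: "ptrace (Q1 \<union> Q2) Q2 \<rho> x y = D x y" if "x \<in> qbasis Q1" "y \<in> qbasis Q1" for x y
  proof -
    have "ptrace (Q1 \<union> Q2) Q2 \<rho> x y = (\<Sum>z\<in>qbasis Q2. \<rho> (merge x z) (merge y z))"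
    proof -
      have "(Q1 \<union> Q2) - Q2 = Q1" "(Q1 \<union> Q2) \<inter> Q2 = Q2" using dis by blast+
      then show ?thesis using that by (simp add: ptrace_def)
    qed
    also have "\<dots> = D x y * braket Q2 \<phi> \<phi>"
      by (simp add: entry that braket_def sum_distrib_left mult.commute)
    finally show ?thesis using braket_self_unit[OF unit] by simp
  qed
  have "\<rho> X Y = tensor_op Q1 Q2 (ptrace (Q1 \<union> Q2) Q2 \<rho>) (proj \<phi>) X Y" for X Y
  proof (cases "X \<in> qbasis (Q1 \<union> Q2) \<and> Y \<in> qbasis (Q1 \<union> Q2)")
    case True
    then show ?thesis
      by (auto elim!: qbasis_UnE simp: tensor_op_merge[OF dis] entry ptrace_eq proj_def)
  qed (use den in \<open>auto simp: density_def is_op_def tensor_op_def\<close>)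
  then show ?thesis by blast
qed

lemma symp_subgroup_sum_eq_0:
  assumes "g \<in> subgroup_sum M T" and "\<forall>\<alpha>\<in>M. \<forall>t\<in>T \<alpha>. symp Q f t = 0"
  shows "symp Q f g = 0"
proof -
  obtain G where g: "g = (\<lambda>j. (\<Sum>\<alpha>\<in>M. fst (G \<alpha> j), \<Sum>\<alpha>\<in>M. snd (G \<alpha> j)))"
    and G: "\<forall>\<alpha>\<in>M. G \<alpha> \<in> T \<alpha>"
    using assms(1) unfolding subgroup_sum_def by blast
  have "symp Q f g = (\<Sum>j\<in>Q. \<Sum>\<alpha>\<in>M. fst (f j) * snd (G \<alpha> j) + snd (f j) * fst (G \<alpha> j))"
    unfolding symp_def g by (simp only: fst_conv snd_conv sum_distrib_left sum.distrib[symmetric])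
  also have "\<dots> = (\<Sum>\<alpha>\<in>M. symp Q f (G \<alpha>))"
    unfolding symp_def by (rule sum.swap)
  also have "\<dots> = 0"
    using assms(2) G by (intro sum.neutral) auto
  finally show ?thesis .
qed

text \<open>A Pauli acting trivially on party alpha has its expectation value fixed by the marginal
  that traces out alpha.\<close>
lemma Gamma_pauli_eigen:
  assumes fin: "finite Q" and \<rho>: "\<rho> \<in> Gamma owner M Q \<Psi>" and \<alpha>: "\<alpha> \<in> M"
    and t_\<alpha>: "\<forall>j. owner j = \<alpha> \<longrightarrow> t j = (0, 0)"
    and unit: "unit_vec Q \<Psi>" and eig: "pauli_apply Q t \<Psi> = (\<lambda>x. e * \<Psi> x)" and e: "e \<in> {1, -1}"
  shows "pauli_apply Q t (\<lambda>x. \<rho> x y) = (\<lambda>x. e * \<rho> x y)"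
proof -
  let ?A = "party_qubits owner Q \<alpha>"
  have den: "density Q \<rho>" and marg: "ptrace Q ?A \<rho> = ptrace Q ?A (proj \<Psi>)"
    using \<rho> \<alpha> by (auto simp: Gamma_def)
  have t_A: "\<forall>j\<in>?A. t j = (0, 0)" using t_\<alpha> by (simp add: party_qubits_def)
  have "pauli_expect Q t \<rho> = pauli_expect Q t (proj \<Psi>)"
    by (simp add: pauli_expect_ptrace[OF fin t_A] marg)
  also have "\<dots> = e" by (rule pauli_expect_proj[OF unit eig])
  finally show ?thesis by (rule density_pauli_eigen[OF fin den e])
qed

lemma ptrace_Int: "ptrace Q (Q \<inter> A) = ptrace Q A"
proof -
  have "Q - Q \<inter> A = Q - A" by blast
  then show ?thesis by (intro ext) (simp add: ptrace_def Int_assoc[symmetric])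
qed
lemma tensor_proj_in_Gamma_iff:
  assumes dis: "Q1 \<inter> Q2 = {}" and unit: "unit_vec Q2 \<phi>" and op: "is_op Q1 \<sigma>"
  shows "tensor_op Q1 Q2 \<sigma> (proj \<phi>) \<in> Gamma owner M (Q1 \<union> Q2) (tensor_vec Q1 Q2 \<psi> \<phi>) \<longleftrightarrow>
      \<sigma> \<in> Gamma owner M Q1 \<psi>"
proof -
  have "party_qubits owner Q1 \<alpha> = Q1 \<inter> party_qubits owner (Q1 \<union> Q2) \<alpha>" for \<alpha>
    by (auto simp: party_qubits_def)
  then show ?thesis
    by (simp add: Gamma_def proj_tensor_vec density_tensor_proj_iff[OF dis unit op]
        ptrace_tensor_proj_eq_iff[OF dis unit] ptrace_Int)
qed

lemma Gamma_tensor_stabilizes_colocal: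
  assumes fin: "finite Q1" "finite Q2" and dis: "Q1 \<inter> Q2 = {}"
    and unit: "unit_vec Q1 \<psi>" "unit_vec Q2 \<phi>"
    and signs: "\<forall>f\<in>S. \<epsilon> f \<in> {1, -1}" and stab: "stabilizes Q2 \<epsilon> S \<phi>" and S_on: "\<forall>f\<in>S. pauli_on Q2 f"
    and \<rho>: "\<rho> \<in> Gamma owner M (Q1 \<union> Q2) (tensor_vec Q1 Q2 \<psi> \<phi>)"
  shows "stabilizes (Q1 \<union> Q2) \<epsilon> (\<Union>\<alpha>\<in>M. colocal owner \<alpha> S) (\<lambda>x. \<rho> x y)"
  unfolding stabilizes_def
proof
  fix t assume "t \<in> (\<Union>\<alpha>\<in>M. colocal owner \<alpha> S)"
  then obtain \<alpha> where \<alpha>: "\<alpha> \<in> M" "\<forall>j. owner j = \<alpha> \<longrightarrow> t j = (0, 0)" and t: "t \<in> S"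
    by (auto simp: colocal_def)
  have "pauli_apply (Q1 \<union> Q2) t (tensor_vec Q1 Q2 \<psi> \<phi>) = tensor_vec Q1 Q2 \<psi> (pauli_apply Q2 t \<phi>)"
    using t S_on by (intro pauli_apply_tensor_vec[OF fin dis]) blast
  then have "pauli_apply (Q1 \<union> Q2) t (tensor_vec Q1 Q2 \<psi> \<phi>) = (\<lambda>x. \<epsilon> t * tensor_vec Q1 Q2 \<psi> \<phi> x)"
    using stab t by (simp add: stabilizes_def tensor_vec_def fun_eq_iff)
  then show "pauli_apply (Q1 \<union> Q2) t (\<lambda>x. \<rho> x y) = (\<lambda>x. \<epsilon> t * \<rho> x y)"
    using signs t fin by (intro Gamma_pauli_eigen[OF _ \<rho> \<alpha> unit_vec_tensor[OF dis unit]]) auto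
qed

theorem corollary1:
  fixes owner :: "nat \<Rightarrow> 'p" and M :: "'p set"
    and Q1 Q2 :: "nat set" and \<psi>' \<phi> :: qvec and S' S\<phi> :: "pauli_label set"
  assumes "finite M" and "finite Q1" and "finite Q2" and "Q1 \<inter> Q2 = {}"
    and "owner ` (Q1 \<union> Q2) \<subseteq> M"
    and "stabilizer_state Q1 S' \<psi>'"
    and "stabilizer_state Q2 S\<phi> \<phi>"
    and "S\<phi> = subgroup_sum M (\<lambda>\<alpha>. colocal owner \<alpha> S\<phi>)"
  shows "Gamma owner M (Q1 \<union> Q2) (tensor_vec Q1 Q2 \<psi>' \<phi>) =
         (\<lambda>\<rho>'. tensor_op Q1 Q2 \<rho>' (proj \<phi>)) ` Gamma owner M Q1 \<psi>'"
proof -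
  note fin = assms(2,3) and dis = assms(4)
  have unit: "unit_vec Q1 \<psi>'" "unit_vec Q2 \<phi>"
    and dual: "S\<phi> = {f. pauli_on Q2 f \<and> (\<forall>g\<in>S\<phi>. symp Q2 f g = 0)}"
    using assms(6,7) by (simp_all add: stabilizer_state_def)
  obtain \<epsilon> where signs: "\<forall>f\<in>S\<phi>. \<epsilon> f \<in> {1, -1}" and stab: "stabilizes Q2 \<epsilon> S\<phi> \<phi>"
    using assms(7) by (auto simp: stabilizer_state_def stabilizes_def)
  have S_on: "\<forall>f\<in>S\<phi>. pauli_on Q2 f" using dual by blast
  define T where "T = (\<Union>\<alpha>\<in>M. colocal owner \<alpha> S\<phi>)"
  have TS: "T \<subseteq> S\<phi>" by (auto simp: T_def colocal_def)
  have gen: "f \<in> S\<phi>" if "pauli_on Q2 f" "\<forall>t\<in>T. symp Q2 f t = 0" for f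
    using that assms(8) symp_subgroup_sum_eq_0[of _ M "\<lambda>\<alpha>. colocal owner \<alpha> S\<phi>" Q2 f] dual
    by (auto simp: T_def)
  have "\<rho> \<in> (\<lambda>\<rho>'. tensor_op Q1 Q2 \<rho>' (proj \<phi>)) ` Gamma owner M Q1 \<psi>'"
    if \<rho>: "\<rho> \<in> Gamma owner M (Q1 \<union> Q2) (tensor_vec Q1 Q2 \<psi>' \<phi>)" for \<rho>
  proof -
    have "\<rho> = tensor_op Q1 Q2 (ptrace (Q1 \<union> Q2) Q2 \<rho>) (proj \<phi>)"
      using \<rho> TS S_on Gamma_tensor_stabilizes_colocal[OF fin dis unit signs stab S_on \<rho>, folded T_def]
      by (intro density_eq_tensor_proj[OF fin dis _ unit(2) signs stab TS gen]) (auto simp: Gamma_def)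
    moreover have "is_op Q1 (ptrace (Q1 \<union> Q2) Q2 \<rho>)"
      using is_op_ptrace[of "Q1 \<union> Q2" Q2 \<rho>] dis by (simp add: Un_Diff Diff_triv)
    ultimately show ?thesis using \<rho> tensor_proj_in_Gamma_iff[OF dis unit(2)] by (metis image_eqI)
  qed
  moreover have "tensor_op Q1 Q2 \<rho>' (proj \<phi>) \<in> Gamma owner M (Q1 \<union> Q2) (tensor_vec Q1 Q2 \<psi>' \<phi>)"
    if "\<rho>' \<in> Gamma owner M Q1 \<psi>'" for \<rho>'
  proof -
    have "is_op Q1 \<rho>'" using that by (simp add: Gamma_def density_def)
    then show ?thesis using that by (simp add: tensor_proj_in_Gamma_iff[OF dis unit(2)])
  qed
  ultimately show ?thesis by blast
qed

end
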